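(* Let $\kappa$ be an algebraically closed field of characteristic zero, complete for a non-trivial non-Archimedean absolute value. Let $a,b\in\kappa$ with $|a|=1$, let $L(z)=az+b$, let $f\in\mathcal{M}(\kappa)$ be a meromorphic function not identically zero, and let $m$ be a positive integer. Then for every $r>|b|$, $$\mu(r,f\circ L)=\mu(r,f),\qquad \mu\!\left(r,\frac{f\circ L}{f}\right)=1,\qquad \mu\!\left(r,\frac{\Delta_L^mf}{f}\right)\le1.$$
   Context: $\mathcal{M}(\kappa)$ is the field of meromorphic functions over $\kappa$, i.e. quotients $g/h$ of entire functions (power series converging on all of $\kappa$), $h\not\equiv0$. For entire $g=\sum a_nz^n$, $\mu(r,g)=\max_n|a_n|r^n$; $\mu(r,g/h)=\mu(r,g)/\mu(r,h)$. $\Delta_Lf=f\circ L-f$ and $\Delta_L^mf=\Delta_L(\Delta_L^{m-1}f)$. *)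

theory Defs
  imports Complex_Main "HOL-Computational_Algebra.Polynomial"
begin

definition nonarch_abs :: "('a::field \<Rightarrow> real) \<Rightarrow> bool" where
  "nonarch_abs v \<longleftrightarrow> (\<forall>x. 0 \<le> v x) \<and> (\<forall>x. v x = 0 \<longleftrightarrow> x = 0)
     \<and> (\<forall>x y. v (x * y) = v x * v y) \<and> (\<forall>x y. v (x + y) \<le> max (v x) (v y))"

definition nontrivial_abs :: "('a::field \<Rightarrow> real) \<Rightarrow> bool" where
  "nontrivial_abs v \<longleftrightarrow> (\<exists>x. v x \<noteq> 0 \<and> v x \<noteq> 1)"

definition complete_abs :: "('a::field \<Rightarrow> real) \<Rightarrow> bool" where
  "complete_abs v \<longleftrightarrow> (\<forall>X::nat \<Rightarrow> 'a.
     (\<forall>e>0. \<exists>N. \<forall>m\<ge>N. \<forall>n\<ge>N. v (X m - X n) < e) \<longrightarrow>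
     (\<exists>l. (\<lambda>n. v (X n - l)) \<longlonglongrightarrow> 0))"

definition alg_closed :: "'a::field itself \<Rightarrow> bool" where
  "alg_closed _ \<longleftrightarrow> (\<forall>p::'a poly. 0 < degree p \<longrightarrow> (\<exists>x. poly p x = 0))"

definition series_sums :: "('a::field \<Rightarrow> real) \<Rightarrow> (nat \<Rightarrow> 'a) \<Rightarrow> 'a \<Rightarrow> 'a \<Rightarrow> bool" where
  "series_sums v c z s \<longleftrightarrow> (\<lambda>N. v ((\<Sum>n<N. c n * z ^ n) - s)) \<longlonglongrightarrow> 0"

definition entire_fun :: "('a::field \<Rightarrow> real) \<Rightarrow> (nat \<Rightarrow> 'a) \<Rightarrow> ('a \<Rightarrow> 'a) \<Rightarrow> bool" where
  "entire_fun v c F \<longleftrightarrow> (\<forall>z. series_sums v c z (F z))"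

definition is_entire :: "('a::field \<Rightarrow> real) \<Rightarrow> ('a \<Rightarrow> 'a) \<Rightarrow> bool" where
  "is_entire v F \<longleftrightarrow> (\<exists>c. entire_fun v c F)"

definition ent_coeffs :: "('a::field \<Rightarrow> real) \<Rightarrow> ('a \<Rightarrow> 'a) \<Rightarrow> nat \<Rightarrow> 'a" where
  "ent_coeffs v F = (SOME c. entire_fun v c F)"

definition mu_ent :: "('a::field \<Rightarrow> real) \<Rightarrow> real \<Rightarrow> ('a \<Rightarrow> 'a) \<Rightarrow> real" where
  "mu_ent v r F = (SUP n. v (ent_coeffs v F n) * r ^ n)"

definition mero_rep :: "('a::field \<Rightarrow> real) \<Rightarrow> ('a \<Rightarrow> 'a) \<Rightarrow> ('a \<Rightarrow> 'a) \<Rightarrow> ('a \<Rightarrow> 'a) \<Rightarrow> bool" where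
  "mero_rep v f g h \<longleftrightarrow> is_entire v g \<and> is_entire v h \<and> (\<exists>z. h z \<noteq> 0)
     \<and> (\<forall>z. h z \<noteq> 0 \<longrightarrow> f z = g z / h z)"

definition is_mero :: "('a::field \<Rightarrow> real) \<Rightarrow> ('a \<Rightarrow> 'a) \<Rightarrow> bool" where
  "is_mero v f \<longleftrightarrow> (\<exists>g h. mero_rep v f g h)"

definition mero_nonzero :: "('a::field \<Rightarrow> real) \<Rightarrow> ('a \<Rightarrow> 'a) \<Rightarrow> bool" where
  "mero_nonzero v f \<longleftrightarrow> (\<exists>g h. mero_rep v f g h \<and> (\<exists>z. g z \<noteq> 0))"

definition mu :: "('a::field \<Rightarrow> real) \<Rightarrow> real \<Rightarrow> ('a \<Rightarrow> 'a) \<Rightarrow> real" where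
  "mu v r f = (let gh = (SOME gh. mero_rep v f (fst gh) (snd gh))
               in mu_ent v r (fst gh) / mu_ent v r (snd gh))"

definition diffL :: "'a::field \<Rightarrow> 'a \<Rightarrow> ('a \<Rightarrow> 'a) \<Rightarrow> ('a \<Rightarrow> 'a)" where
  "diffL a b f = (\<lambda>z. f (a * z + b) - f z)"

end

theory Submission
  imports Defs
begin

text \<open>
  On entire functions \<mu>(r, -) is the maximal term of the coefficient sequence. Over an
  ultrametric field it is multiplicative (at the sum of the two central indices one product of
  coefficients strictly dominates all others) and satisfies \<mu>(r, g + h) \<le> max (\<mu>(r, g)) (\<mu>(r, h)).
  Hence \<mu>(r, g/h) does not depend on the representation of a meromorphic function, and it is
  multiplicative and ultrametric on meromorphic functions as well.
  For |\<alpha>| = 1 and |\<beta>| \<le> r, the Taylor coefficients c'_k of g(\<alpha> z + \<beta>) satisfy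
  |c'_k| r^k \<le> \<mu>(r, g), because binomial coefficients have absolute value at most 1; applied
  also to the inverse map this gives \<mu>(r, g \<circ> L) = \<mu>(r, g). Thus \<mu>(r, f \<circ> L / f) = 1, and
  since \<Delta>_L^m f is a sum of terms \<plusminus>f(\<alpha> z + \<beta>) with |\<alpha>| = 1 and |\<beta>| \<le> r, the
  ultrametric inequality gives \<mu>(r, \<Delta>_L^m f / f) \<le> 1.
\<close>

lemma sum_triangle_split:
  fixes u :: "nat \<Rightarrow> nat \<Rightarrow> 'a::comm_monoid_add"
  assumes "K \<le> N"
  shows "(\<Sum>n<N. \<Sum>k\<le>n. u n k) = (\<Sum>k<K. \<Sum>j<N - k. u (j + k) k) + (\<Sum>n<N. \<Sum>k\<in>{K..n}. u n k)"
proof -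
  have "(\<Sum>k\<le>n. u n k) = (\<Sum>k\<in>{k. k < K \<and> k \<le> n}. u n k) + (\<Sum>k\<in>{K..n}. u n k)" for n
    by (subst sum.union_disjoint[symmetric]) (auto intro: sum.cong)
  then have "(\<Sum>n<N. \<Sum>k\<le>n. u n k)
      = (\<Sum>n<N. \<Sum>k\<in>{k. k < K \<and> k \<le> n}. u n k) + (\<Sum>n<N. \<Sum>k\<in>{K..n}. u n k)"
    by (simp add: sum.distrib)
  moreover have "(\<Sum>n<N. \<Sum>k\<in>{k. k < K \<and> k \<le> n}. u n k) = (\<Sum>k<K. \<Sum>n\<in>{k..<N}. u n k)"
  proof -
    have "(\<Sum>n<N. \<Sum>k\<in>{k. k \<in> {..<K} \<and> k \<le> n}. u n k) = (\<Sum>k<K. \<Sum>n\<in>{n. n \<in> {..<N} \<and> k \<le> n}. u n k)"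
      by (rule sum.swap_restrict) auto
    moreover have "{n. n \<in> {..<N} \<and> k \<le> n} = {k..<N}" for k
      by auto
    ultimately show ?thesis
      by simp
  qed
  moreover have "(\<Sum>n\<in>{k..<N}. u n k) = (\<Sum>j<N - k. u (j + k) k)" if "k < K" for k
    using that assms by (intro sum.reindex_bij_witness[of _ "\<lambda>j. j + k" "\<lambda>n. n - k"]) auto
  ultimately show ?thesis
    by simp
qed

definition cauchy_prod :: "(nat \<Rightarrow> 'a::comm_semiring_0) \<Rightarrow> (nat \<Rightarrow> 'a) \<Rightarrow> nat \<Rightarrow> 'a" where
  "cauchy_prod c d n = (\<Sum>i\<le>n. c i * d (n - i))"

section \<open>Ultrametric absolute values\<close>

locale nonarch_field =
  fixes v :: "'a::field \<Rightarrow> real"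
  assumes nonarch: "nonarch_abs v"
begin

lemma v_nonneg [simp]: "0 \<le> v x"
  using nonarch unfolding nonarch_abs_def by blast

lemma v_eq_0_iff [simp]: "v x = 0 \<longleftrightarrow> x = 0"
  using nonarch unfolding nonarch_abs_def by blast

lemma v_zero [simp]: "v 0 = 0"
  by simp

lemma v_pos_iff [simp]: "0 < v x \<longleftrightarrow> x \<noteq> 0"
  using v_nonneg[of x] v_eq_0_iff[of x] by linarith

lemma v_mult: "v (x * y) = v x * v y"
  using nonarch unfolding nonarch_abs_def by blast

lemma v_add_le: "v (x + y) \<le> max (v x) (v y)"
  using nonarch unfolding nonarch_abs_def by blast

lemma v_one [simp]: "v 1 = 1"
  using v_mult[of 1 1] v_eq_0_iff[of 1] by simp

lemma v_minus [simp]: "v (- x) = v x"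
proof -
  have "v (-1) * v (-1) = 1"
    using v_mult[of "-1" "-1"] by simp
  then have "v (-1) = 1"
    by (metis v_nonneg abs_of_nonneg real_sqrt_abs real_sqrt_one power2_eq_square)
  then show ?thesis
    using v_mult[of "-1" x] by simp
qed

lemma v_add_le_add: "v (x + y) \<le> v x + v y"
  using v_add_le[of x y] v_nonneg[of x] v_nonneg[of y] by linarith

lemma v_diff_le: "v (x - y) \<le> max (v x) (v y)"
  using v_add_le[of x "- y"] by simp

lemma v_diff_commute: "v (x - y) = v (y - x)"
  by (metis minus_diff_eq v_minus)

lemma v_diff_le_add: "v (x - z) \<le> v (x - y) + v (y - z)"
  using v_add_le_add[of "x - y" "y - z"] by simp

lemma v_power: "v (x ^ n) = v x ^ n"
  by (induction n) (simp_all add: v_mult)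

lemma v_inverse: "v (inverse x) = inverse (v x)"
proof (cases "x = 0")
  case False
  then have "v x * v (inverse x) = 1"
    by (simp add: v_mult[symmetric])
  then show ?thesis
    by (rule inverse_unique[symmetric])
qed simp

lemma v_divide: "v (x / y) = v x / v y"
  by (simp add: divide_inverse v_mult v_inverse)

lemma v_of_nat_le: "v (of_nat n) \<le> 1"
proof (induction n)
  case (Suc n)
  then show ?case
    using v_add_le[of 1 "of_nat n"] by simp
qed simp

lemma v_add_eq_left:
  assumes "v y < v x"
  shows "v (x + y) = v x"
proof -
  have "v x \<le> max (v (x + y)) (v y)"
    using v_diff_le[of "x + y" y] by simp
  then show ?thesis
    using v_add_le[of x y] assms by linarith
qed

lemma v_sum_le:
  assumes "\<And>i. i \<in> S \<Longrightarrow> v (f i) \<le> B" "0 \<le> B"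
  shows "v (sum f S) \<le> B"
  using assms
  by (induction S rule: infinite_finite_induct) (auto intro: order_trans[OF v_add_le])

lemma v_sum_less:
  assumes "\<And>i. i \<in> S \<Longrightarrow> v (f i) < B" "0 < B"
  shows "v (sum f S) < B"
  using assms
  by (induction S rule: infinite_finite_induct) (auto intro: order.strict_trans1[OF v_add_le])

section \<open>Convergence with respect to v\<close>

definition v_tendsto :: "(nat \<Rightarrow> 'a) \<Rightarrow> 'a \<Rightarrow> bool" where
  "v_tendsto X l \<longleftrightarrow> (\<lambda>n. v (X n - l)) \<longlonglongrightarrow> 0"

lemma series_sums_iff_v_tendsto: "series_sums v c z s \<longleftrightarrow> v_tendsto (\<lambda>N. \<Sum>n<N. c n * z ^ n) s"
  unfolding series_sums_def v_tendsto_def ..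

lemma v_null_iff_eventually_le:
  "(\<lambda>n. v (t n)) \<longlonglongrightarrow> 0 \<longleftrightarrow> (\<forall>e>0. \<forall>\<^sub>F n in sequentially. v (t n) \<le> e)"
proof
  assume "(\<lambda>n. v (t n)) \<longlonglongrightarrow> 0"
  then show "\<forall>e>0. \<forall>\<^sub>F n in sequentially. v (t n) \<le> e"
    by (auto dest: order_tendstoD(2) elim!: eventually_mono)
next
  assume le: "\<forall>e>0. \<forall>\<^sub>F n in sequentially. v (t n) \<le> e"
  show "(\<lambda>n. v (t n)) \<longlonglongrightarrow> 0"
  proof (rule order_tendstoI)
    fix e :: real
    assume "0 < e"
    then show "\<forall>\<^sub>F n in sequentially. v (t n) < e"
      using le[rule_format, of "e / 2"] by (auto elim: eventually_mono)
  next
    fix e :: real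
    assume "e < 0"
    then show "\<forall>\<^sub>F n in sequentially. e < v (t n)"
      using v_nonneg less_le_trans by (blast intro: always_eventually)
  qed
qed

lemma v_null_le:
  assumes "\<forall>\<^sub>F n in sequentially. v (t n) \<le> g n" "g \<longlonglongrightarrow> 0"
  shows "(\<lambda>n. v (t n)) \<longlonglongrightarrow> 0"
  by (rule tendsto_sandwich[OF _ assms(1) tendsto_const assms(2)]) simp

lemma v_null_bounded:
  assumes "(\<lambda>n. v (t n)) \<longlonglongrightarrow> 0"
  obtains C where "\<And>n. v (t n) \<le> C"
  using Bseq_bdd_above[OF convergent_imp_Bseq] assms
  by (metis bdd_above.E convergent_def rangeI)

lemma v_tendsto_close:
  assumes "v_tendsto X l" "(\<lambda>n. v (Y n - X n)) \<longlonglongrightarrow> 0"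
  shows "v_tendsto Y l"
  unfolding v_tendsto_def
proof (rule v_null_le)
  show "\<forall>\<^sub>F n in sequentially. v (Y n - l) \<le> v (Y n - X n) + v (X n - l)"
    using v_diff_le_add[of "Y n" l "X n" for n] by simp
  show "(\<lambda>n. v (Y n - X n) + v (X n - l)) \<longlonglongrightarrow> 0"
    using tendsto_add[OF assms(2) assms(1)[unfolded v_tendsto_def]] by simp
qed

lemma v_tendsto_unique:
  assumes "v_tendsto X l" "v_tendsto X l'"
  shows "l = l'"
proof -
  have "v (l - l') \<le> v (X n - l) + v (X n - l')" for n
    using v_diff_le_add[of l l' "X n"] v_diff_commute[of l "X n"] by simp
  moreover have "(\<lambda>n. v (X n - l) + v (X n - l')) \<longlonglongrightarrow> 0"
    using assms tendsto_add_zero unfolding v_tendsto_def by blast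
  ultimately have "v (l - l') \<le> 0"
    by (intro LIMSEQ_le_const) auto
  then show ?thesis
    using v_nonneg[of "l - l'"] by simp
qed

lemma v_tendsto_const: "v_tendsto (\<lambda>n. l) l"
  unfolding v_tendsto_def by simp

lemma v_tendsto_add:
  assumes "v_tendsto X l" "v_tendsto Y m"
  shows "v_tendsto (\<lambda>n. X n + Y n) (l + m)"
  unfolding v_tendsto_def
proof (rule v_null_le)
  show "\<forall>\<^sub>F n in sequentially. v (X n + Y n - (l + m)) \<le> v (X n - l) + v (Y n - m)"
    using v_add_le_add[of "X n - l" "Y n - m" for n] by (simp add: algebra_simps)
  show "(\<lambda>n. v (X n - l) + v (Y n - m)) \<longlonglongrightarrow> 0"
    using tendsto_add_zero assms unfolding v_tendsto_def by blast
qed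

lemma v_tendsto_mult:
  assumes "v_tendsto X l" "v_tendsto Y m"
  shows "v_tendsto (\<lambda>n. X n * Y n) (l * m)"
  unfolding v_tendsto_def
proof (rule v_null_le)
  have "v (X n * Y n - l * m) \<le> v (X n - l) * v (Y n - m) + v (X n - l) * v m + v l * v (Y n - m)"
    for n
  proof -
    have "X n * Y n - l * m = ((X n - l) * (Y n - m) + (X n - l) * m) + l * (Y n - m)"
      by (simp add: algebra_simps)
    then have "v (X n * Y n - l * m) \<le> v ((X n - l) * (Y n - m) + (X n - l) * m) + v (l * (Y n - m))"
      by (simp only: v_add_le_add)
    also have "\<dots> \<le> v ((X n - l) * (Y n - m)) + v ((X n - l) * m) + v (l * (Y n - m))"
      by (simp add: v_add_le_add)
    finally show ?thesis
      by (simp add: v_mult)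
  qed
  then show "\<forall>\<^sub>F n in sequentially. v (X n * Y n - l * m)
      \<le> v (X n - l) * v (Y n - m) + v (X n - l) * v m + v l * v (Y n - m)"
    by simp
  show "(\<lambda>n. v (X n - l) * v (Y n - m) + v (X n - l) * v m + v l * v (Y n - m)) \<longlonglongrightarrow> 0"
    using assms unfolding v_tendsto_def
    by (intro tendsto_add_zero tendsto_mult_zero tendsto_mult_left_zero tendsto_mult_right_zero)
qed

lemma v_tendsto_cmult:
  assumes "v_tendsto X l"
  shows "v_tendsto (\<lambda>n. w * X n) (w * l)"
  using v_tendsto_mult[OF v_tendsto_const assms] .

lemma v_tendsto_closed_ball:
  assumes "v_tendsto X l" "\<forall>\<^sub>F n in sequentially. v (X n - y) \<le> B"
  shows "v (l - y) \<le> B"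
proof -
  have "v (l - y) \<le> v (X n - l) + B" if "v (X n - y) \<le> B" for n
    using v_diff_le_add[of l y "X n"] v_diff_commute[of l "X n"] that by linarith
  then have "\<forall>\<^sub>F n in sequentially. v (l - y) \<le> v (X n - l) + B"
    using assms(2) by (auto elim!: eventually_mono)
  moreover have "(\<lambda>n. v (X n - l) + B) \<longlonglongrightarrow> 0 + B"
    using assms(1) unfolding v_tendsto_def by (intro tendsto_add) auto
  ultimately show ?thesis
    by (simp add: LIMSEQ_le_const eventually_sequentially)
qed

lemma v_tendsto_series_terms:
  assumes "v_tendsto (\<lambda>N. \<Sum>n<N. t n) s"
  shows "(\<lambda>n. v (t n)) \<longlonglongrightarrow> 0"
proof (rule v_null_le)
  have "v (t n) \<le> v ((\<Sum>k<Suc n. t k) - s) + v ((\<Sum>k<n. t k) - s)" for n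
    using v_diff_le_add[of "\<Sum>k<Suc n. t k" "\<Sum>k<n. t k" s] v_diff_commute[of s]
    by simp
  then show "\<forall>\<^sub>F n in sequentially. v (t n) \<le> v ((\<Sum>k<Suc n. t k) - s) + v ((\<Sum>k<n. t k) - s)"
    by simp
  show "(\<lambda>n. v ((\<Sum>k<Suc n. t k) - s) + v ((\<Sum>k<n. t k) - s)) \<longlonglongrightarrow> 0"
    using assms unfolding v_tendsto_def by (intro tendsto_add_zero LIMSEQ_Suc)
qed

lemma v_tendsto_series_tail_le:
  assumes "v_tendsto (\<lambda>N. \<Sum>n<N. t n) s" "0 \<le> B" "\<And>n. N \<le> n \<Longrightarrow> v (t n) \<le> B"
  shows "v (s - (\<Sum>n<N. t n)) \<le> B"
proof (rule v_tendsto_closed_ball[OF assms(1)])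
  have "v ((\<Sum>k<n. t k) - (\<Sum>k<N. t k)) \<le> B" if "N \<le> n" for n
  proof -
    have "(\<Sum>k<n. t k) - (\<Sum>k<N. t k) = sum t {N..<n}"
      using sum_diff_nat_ivl[of 0 N n t] that by (simp add: lessThan_atLeast0)
    then show ?thesis
      using assms(2,3) by (auto intro: v_sum_le)
  qed
  then show "\<forall>\<^sub>F n in sequentially. v ((\<Sum>k<n. t k) - (\<Sum>k<N. t k)) \<le> B"
    by (auto simp: eventually_sequentially)
qed

lemma v_tendsto_cauchy_product:
  assumes a: "v_tendsto (\<lambda>N. \<Sum>i<N. a i) A" and b: "v_tendsto (\<lambda>N. \<Sum>j<N. b j) B"
  shows "v_tendsto (\<lambda>N. \<Sum>n<N. \<Sum>i\<le>n. a i * b (n - i)) (A * B)"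
proof (rule v_tendsto_close[OF v_tendsto_mult[OF a b]])
  have a0: "(\<lambda>i. v (a i)) \<longlonglongrightarrow> 0" and b0: "(\<lambda>j. v (b j)) \<longlonglongrightarrow> 0"
    using a b by (simp_all add: v_tendsto_series_terms)
  obtain Ca where Ca: "\<And>i. v (a i) \<le> Ca"
    using v_null_bounded[OF a0] by blast
  obtain Cb where Cb: "\<And>j. v (b j) \<le> Cb"
    using v_null_bounded[OF b0] by blast
  define C where "C = max Ca Cb + 1"
  have C: "0 < C" "Ca \<le> C" "Cb \<le> C"
    unfolding C_def using order_trans[OF v_nonneg Ca] by auto
  define D where "D N = ({..<N} \<times> {..<N}) - {(i, j). i + j < N}" for N :: nat
  have diff: "(\<Sum>n<N. \<Sum>i\<le>n. a i * b (n - i)) - (\<Sum>i<N. a i) * (\<Sum>j<N. b j)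
      = - (\<Sum>(i, j)\<in>D N. a i * b j)" for N
  proof -
    have "(\<Sum>n<N. \<Sum>i\<le>n. a i * b (n - i)) = (\<Sum>(i, j)\<in>{(i, j). i + j < N}. a i * b j)"
      by (rule sum.triangle_reindex[symmetric])
    moreover have "(\<Sum>i<N. a i) * (\<Sum>j<N. b j) = (\<Sum>(i, j)\<in>{..<N} \<times> {..<N}. a i * b j)"
      by (simp add: sum_product sum.cartesian_product)
    moreover have "{(i, j). i + j < N} \<subseteq> {..<N} \<times> {..<N}"
      by auto
    ultimately show ?thesis
      unfolding D_def by (simp add: sum_diff)
  qed
  show "(\<lambda>N. v ((\<Sum>n<N. \<Sum>i\<le>n. a i * b (n - i)) - (\<Sum>i<N. a i) * (\<Sum>j<N. b j))) \<longlonglongrightarrow> 0"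
    unfolding diff v_minus v_null_iff_eventually_le
  proof (intro allI impI)
    fix e :: real
    assume "0 < e"
    then have "\<forall>\<^sub>F n in sequentially. v (a n) \<le> e / C" "\<forall>\<^sub>F n in sequentially. v (b n) \<le> e / C"
      using a0 b0 C(1) by (simp_all add: v_null_iff_eventually_le)
    then obtain M where Ma: "\<And>i. M \<le> i \<Longrightarrow> v (a i) \<le> e / C" and Mb: "\<And>j. M \<le> j \<Longrightarrow> v (b j) \<le> e / C"
      unfolding eventually_sequentially by (metis max.bounded_iff nle_le)
    have "v (a i * b j) \<le> e" if "(i, j) \<in> D N" "2 * M \<le> N" for i j N
    proof -
      have "M \<le> i \<or> M \<le> j"
        using that unfolding D_def by auto
      then have "v (a i) * v (b j) \<le> e / C * C"
      proof
        assume "M \<le> i"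
        then show ?thesis
          using Ma Cb[of j] C \<open>0 < e\<close> by (intro mult_mono) auto
      next
        assume "M \<le> j"
        then show ?thesis
          using Mb[of j] Ca[of i] C \<open>0 < e\<close> by (subst mult.commute, intro mult_mono) auto
      qed
      then show ?thesis
        using C by (simp add: v_mult)
    qed
    then have "v (\<Sum>(i, j)\<in>D N. a i * b j) \<le> e" if "2 * M \<le> N" for N
      using that \<open>0 < e\<close> by (auto intro: v_sum_le)
    then show "\<forall>\<^sub>F N in sequentially. v (\<Sum>(i, j)\<in>D N. a i * b j) \<le> e"
      unfolding eventually_sequentially by blast
  qed
qed

text \<open>No absolute convergence is needed: in the ultrametric setting uniform decay of the terms suffices.\<close>

lemma v_tendsto_double_series_swap:
  assumes bound: "\<And>n k. k \<le> n \<Longrightarrow> v (u n k) \<le> B n" and B: "B \<longlonglongrightarrow> 0"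
    and rows: "v_tendsto (\<lambda>N. \<Sum>n<N. \<Sum>k\<le>n. u n k) S"
    and cols: "\<And>k. v_tendsto (\<lambda>J. \<Sum>j<J. u (j + k) k) (E k)"
  shows "v_tendsto (\<lambda>K. \<Sum>k<K. E k) S"
  unfolding v_tendsto_def v_null_iff_eventually_le
proof (intro allI impI)
  fix e :: real
  assume "0 < e"
  then obtain K0 where K0: "\<And>n. K0 \<le> n \<Longrightarrow> B n < e"
    using order_tendstoD(2)[OF B] unfolding eventually_sequentially by blast
  have small: "v (u n k) \<le> e" if "k \<le> n" "K0 \<le> n" for n k
    using bound[OF that(1)] K0[OF that(2)] by simp
  have "v ((\<Sum>k<K. E k) - S) \<le> e" if "K0 \<le> K" for K
  proof -
    define \<delta> where "\<delta> N k = E k - (\<Sum>j<N - k. u (j + k) k)" for N k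
    have "v ((\<Sum>n<N. \<Sum>k\<le>n. u n k) - (\<Sum>k<K. E k)) \<le> e" if "K \<le> N" for N
    proof -
      have split: "(\<Sum>n<N. \<Sum>k\<le>n. u n k) - (\<Sum>k<K. E k) = (\<Sum>n<N. \<Sum>k\<in>{K..n}. u n k) - (\<Sum>k<K. \<delta> N k)"
        using sum_triangle_split[OF that, of u] by (simp add: \<delta>_def sum_subtractf)
      have "v (\<Sum>n<N. \<Sum>k\<in>{K..n}. u n k) \<le> e"
        using small \<open>K0 \<le> K\<close> \<open>0 < e\<close> by (intro v_sum_le) auto
      moreover have "v (\<delta> N k) \<le> e" if "k < K" for k
        unfolding \<delta>_def
      proof (rule v_tendsto_series_tail_le[OF cols])
        fix j
        assume "N - k \<le> j"
        then show "v (u (j + k) k) \<le> e"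
          using \<open>k < K\<close> \<open>K \<le> N\<close> \<open>K0 \<le> K\<close> by (intro small) auto
      qed (use \<open>0 < e\<close> in simp)
      then have "v (\<Sum>k<K. \<delta> N k) \<le> e"
        using \<open>0 < e\<close> by (intro v_sum_le) auto
      ultimately show ?thesis
        unfolding split using v_diff_le[of "\<Sum>n<N. \<Sum>k\<in>{K..n}. u n k" "\<Sum>k<K. \<delta> N k"] by simp
    qed
    then have "v (S - (\<Sum>k<K. E k)) \<le> e"
      by (intro v_tendsto_closed_ball[OF rows]) (auto simp: eventually_sequentially)
    then show ?thesis
      by (simp add: v_diff_commute)
  qed
  then show "\<forall>\<^sub>F K in sequentially. v ((\<Sum>k<K. E k) - S) \<le> e"
    unfolding eventually_sequentially by blast
qed

end

locale nonarch_complete_field = nonarch_field +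
  assumes nontrivial: "nontrivial_abs v" and complete: "complete_abs v"
begin

lemma exists_v_pos_less_1: "\<exists>y. 0 < v y \<and> v y < 1"
proof -
  obtain x where x: "v x \<noteq> 0" "v x \<noteq> 1"
    using nontrivial unfolding nontrivial_abs_def by blast
  show ?thesis
  proof (cases "v x < 1")
    case False
    then show ?thesis
      using x by (intro exI[of _ "inverse x"]) (auto simp: v_inverse inverse_less_1_iff)
  qed (use x in auto)
qed

lemma exists_v_ge: "\<exists>z. s \<le> v z"
proof -
  obtain y where "0 < v y" "v y < 1"
    using exists_v_pos_less_1 by blast
  then have "1 < v (inverse y)"
    by (simp add: v_inverse one_less_inverse)
  then obtain n where "s < v (inverse y) ^ n"
    using real_arch_pow by blast
  then show ?thesis
    by (metis less_imp_le v_power)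
qed

lemma exists_v_less:
  assumes "0 < e"
  shows "\<exists>z. z \<noteq> 0 \<and> v z < e"
proof -
  obtain y where y: "0 < v y" "v y < 1"
    using exists_v_pos_less_1 by blast
  then obtain n where "v y ^ n < e"
    using real_arch_pow_inv[OF assms] by blast
  then show ?thesis
    using y by (intro exI[of _ "y ^ n"]) (simp add: v_power)
qed

lemma series_v_tendsto_if_v_null:
  assumes "(\<lambda>n. v (t n)) \<longlonglongrightarrow> 0"
  obtains s where "v_tendsto (\<lambda>N. \<Sum>n<N. t n) s"
proof -
  have "\<exists>N. \<forall>p\<ge>N. \<forall>q\<ge>N. v ((\<Sum>n<p. t n) - (\<Sum>n<q. t n)) < e" if "0 < e" for e
  proof -
    obtain N where N: "\<And>n. N \<le> n \<Longrightarrow> v (t n) < e"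
      using order_tendstoD(2)[OF assms \<open>0 < e\<close>] by (auto simp: eventually_sequentially)
    have less: "v ((\<Sum>n<p. t n) - (\<Sum>n<q. t n)) < e" if "N \<le> q" "q \<le> p" for p q
    proof -
      have "(\<Sum>n<p. t n) - (\<Sum>n<q. t n) = sum t {q..<p}"
        using sum_diff_nat_ivl[of 0 q p t] that by (simp add: lessThan_atLeast0)
      then show ?thesis
        using N that \<open>0 < e\<close> by (auto intro: v_sum_less)
    qed
    have "v ((\<Sum>n<p. t n) - (\<Sum>n<q. t n)) < e" if "N \<le> p" "N \<le> q" for p q
    proof (cases "q \<le> p")
      case False
      then show ?thesis
        using less[of p q] that v_diff_commute[of "\<Sum>n<p. t n"] by simp
    qed (use less that in simp)
    then show ?thesis
      by blast
  qed
  then have "\<exists>s. (\<lambda>N. v ((\<Sum>n<N. t n) - s)) \<longlonglongrightarrow> 0"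
    using complete[unfolded complete_abs_def, rule_format, of "\<lambda>N. \<Sum>n<N. t n"] by blast
  then show ?thesis
    using that unfolding v_tendsto_def by blast
qed

section \<open>Entire functions and the maximal term\<close>

lemma entire_fun_terms_tendsto_0:
  assumes "entire_fun v c F" "0 \<le> s"
  shows "(\<lambda>n. v (c n) * s ^ n) \<longlonglongrightarrow> 0"
proof -
  obtain z where z: "s \<le> v z"
    using exists_v_ge by blast
  have "v_tendsto (\<lambda>N. \<Sum>n<N. c n * z ^ n) (F z)"
    using assms(1) unfolding entire_fun_def series_sums_iff_v_tendsto ..
  then have lim: "(\<lambda>n. v (c n * z ^ n)) \<longlonglongrightarrow> 0"
    by (rule v_tendsto_series_terms)
  have "v (c n) * s ^ n \<le> v (c n * z ^ n)" for n
    unfolding v_mult v_power using z assms(2) by (intro mult_left_mono power_mono) auto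
  then show ?thesis
    using assms(2) by (intro real_tendsto_sandwich[OF _ _ tendsto_const lim]) (simp_all add: always_eventually)
qed

definition max_term :: "real \<Rightarrow> (nat \<Rightarrow> 'a) \<Rightarrow> real" where
  "max_term r c = (SUP n. v (c n) * r ^ n)"

lemma max_term_upper:
  assumes "entire_fun v c F" "0 \<le> r"
  shows "v (c n) * r ^ n \<le> max_term r c"
proof -
  have "convergent (\<lambda>n. v (c n) * r ^ n)"
    using entire_fun_terms_tendsto_0[OF assms] by (auto simp: convergent_def)
  then have "bdd_above (range (\<lambda>n. v (c n) * r ^ n))"
    by (intro Bseq_bdd_above convergent_imp_Bseq)
  then show ?thesis
    unfolding max_term_def by (rule cSUP_upper[OF UNIV_I])
qed

lemma max_term_least:
  assumes "\<And>n. v (c n) * r ^ n \<le> B"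
  shows "max_term r c \<le> B"
  unfolding max_term_def using assms by (intro cSUP_least) auto

lemma max_term_nonneg:
  assumes "entire_fun v c F" "0 \<le> r"
  shows "0 \<le> max_term r c"
proof -
  have "v (c 0) \<le> max_term r c"
    using max_term_upper[OF assms, of 0] by simp
  then show ?thesis
    using v_nonneg[of "c 0"] by linarith
qed

lemma max_term_pos:
  assumes "entire_fun v c F" "0 < r" "c n \<noteq> 0"
  shows "0 < max_term r c"
  using max_term_upper[of c F r n] assms by (smt (verit) v_pos_iff zero_less_mult_iff zero_less_power)

lemma max_term_0 [simp]: "max_term r (\<lambda>n. 0) = 0"
  unfolding max_term_def by simp

lemma max_term_attained:
  assumes "entire_fun v c F" "0 < r" "c n \<noteq> 0"
  obtains i where "v (c i) * r ^ i = max_term r c"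
proof -
  define t where "t n = v (c n) * r ^ n" for n
  have pos: "0 < t n"
    unfolding t_def using assms by simp
  have "t \<longlonglongrightarrow> 0"
    unfolding t_def using entire_fun_terms_tendsto_0[OF assms(1)] assms(2) by simp
  from order_tendstoD(2)[OF this pos] obtain N where N: "\<And>k. N \<le> k \<Longrightarrow> t k < t n"
    unfolding eventually_sequentially by blast
  then have "n < N"
    by (meson less_irrefl not_le)
  define m where "m = Max (t ` {..<N})"
  have fin: "finite (t ` {..<N})" "t ` {..<N} \<noteq> {}"
    using \<open>n < N\<close> by auto
  have "t k \<le> m" for k
  proof (cases "k < N")
    case False
    then have "t k < t n"
      using N by simp
    also have "t n \<le> m"
      unfolding m_def using fin \<open>n < N\<close> by (intro Max_ge) auto
    finally show ?thesis
      by simp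
  qed (simp add: m_def fin)
  then have "max_term r c \<le> m"
    unfolding t_def by (intro max_term_least)
  moreover obtain i where "t i = m"
    using Max_in[OF fin] unfolding m_def by (metis imageE)
  moreover have "t i \<le> max_term r c"
    unfolding t_def using max_term_upper[OF assms(1)] assms(2) by simp
  ultimately show ?thesis
    using that unfolding t_def by (metis order_antisym)
qed

text \<open>The least index at which the maximal term is attained is the central index of the paper.\<close>

lemma max_term_central_index:
  assumes "entire_fun v c F" "0 < r" "c n \<noteq> 0"
  obtains i where "v (c i) * r ^ i = max_term r c" "\<And>k. k < i \<Longrightarrow> v (c k) * r ^ k < max_term r c"
proof -
  define i where "i = (LEAST i. v (c i) * r ^ i = max_term r c)"
  obtain j where "v (c j) * r ^ j = max_term r c"
    using max_term_attained[OF assms] .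
  then have "v (c i) * r ^ i = max_term r c"
    unfolding i_def by (rule LeastI)
  moreover have "v (c k) * r ^ k < max_term r c" if "k < i" for k
    using not_less_Least[OF that[unfolded i_def]] max_term_upper[OF assms(1)] assms(2)
    by (simp add: order_less_le)
  ultimately show ?thesis
    using that by blast
qed

text \<open>Near 0 the lowest nonvanishing term of a power series dominates all the others.\<close>

lemma entire_fun_zero_imp_coeffs_zero:
  assumes "entire_fun v c (\<lambda>z. 0)"
  shows "c n = 0"
proof (rule ccontr)
  assume "c n \<noteq> 0"
  define n0 where "n0 = (LEAST n. c n \<noteq> 0)"
  have cn0: "c n0 \<noteq> 0"
    unfolding n0_def using \<open>c n \<noteq> 0\<close> by (rule LeastI)
  have below: "c i = 0" if "i < n0" for i
    using not_less_Least[OF that[unfolded n0_def]] by simp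
  define B where "B = max_term 1 c"
  have B: "0 \<le> B" "\<And>n. v (c n) \<le> B"
    unfolding B_def using max_term_nonneg[OF assms, of 1] max_term_upper[OF assms, of 1] by simp_all
  have small: "v (c n0) \<le> B * v z" if z: "z \<noteq> 0" "v z < 1" for z
  proof -
    have "v_tendsto (\<lambda>N. \<Sum>n<N. c n * z ^ n) 0"
      using assms unfolding entire_fun_def series_sums_iff_v_tendsto ..
    moreover have "v (c n * z ^ n) \<le> B * v z ^ Suc n0" if "Suc n0 \<le> n" for n
      unfolding v_mult v_power using B z that by (intro mult_mono power_decreasing) auto
    ultimately have "v (0 - (\<Sum>n<Suc n0. c n * z ^ n)) \<le> B * v z ^ Suc n0"
      using B by (intro v_tendsto_series_tail_le) auto
    moreover have "(\<Sum>n<Suc n0. c n * z ^ n) = c n0 * z ^ n0"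
      using below by simp
    ultimately have "v (c n0) * v z ^ n0 \<le> (B * v z) * v z ^ n0"
      by (simp add: v_mult v_power mult_ac)
    then show ?thesis
      using z by simp
  qed
  have "v (c n0) \<le> e" if "0 < e" for e
  proof -
    obtain z where z: "z \<noteq> 0" "v z < min 1 (e / (B + 1))"
      using exists_v_less[of "min 1 (e / (B + 1))"] \<open>0 < e\<close> B by auto
    have "v (c n0) \<le> B * v z"
      using small z by simp
    also have "\<dots> \<le> (B + 1) * (e / (B + 1))"
      using z B by (intro mult_mono) auto
    finally show ?thesis
      using B by simp
  qed
  from this[of "v (c n0) / 2"] show False
    using cn0 by simp
qed

lemma entire_fun_const: "entire_fun v (\<lambda>n. if n = 0 then w else 0) (\<lambda>z. w)"
  unfolding entire_fun_def series_sums_iff_v_tendsto v_tendsto_def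
proof
  fix z
  have "(\<Sum>n<N. (if n = 0 then w else 0) * z ^ n) = w" if "1 \<le> N" for N
    using that by (induction N rule: dec_induct) auto
  then have "\<forall>\<^sub>F N in sequentially. v ((\<Sum>n<N. (if n = 0 then w else 0) * z ^ n) - w) \<le> 0"
    unfolding eventually_sequentially by (auto intro!: exI[of _ 1])
  then show "(\<lambda>N. v ((\<Sum>n<N. (if n = 0 then w else 0) * z ^ n) - w)) \<longlonglongrightarrow> 0"
    by (intro v_null_le[OF _ tendsto_const])
qed

lemma entire_fun_add:
  assumes "entire_fun v c F" "entire_fun v d G"
  shows "entire_fun v (\<lambda>n. c n + d n) (\<lambda>z. F z + G z)"
  using assms unfolding entire_fun_def series_sums_iff_v_tendsto
  by (auto simp: distrib_right sum.distrib intro!: v_tendsto_add)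

lemma entire_fun_cmult:
  assumes "entire_fun v c F"
  shows "entire_fun v (\<lambda>n. w * c n) (\<lambda>z. w * F z)"
  using assms unfolding entire_fun_def series_sums_iff_v_tendsto
  by (simp add: mult.assoc v_tendsto_cmult flip: sum_distrib_left)

lemma entire_fun_diff:
  assumes "entire_fun v c F" "entire_fun v d G"
  shows "entire_fun v (\<lambda>n. c n - d n) (\<lambda>z. F z - G z)"
  using entire_fun_add[OF assms(1) entire_fun_cmult[OF assms(2), of "- 1"]] by simp

lemma entire_fun_coeffs_unique:
  assumes "entire_fun v c F" "entire_fun v d F"
  shows "c = d"
proof
  fix n
  have "entire_fun v (\<lambda>n. c n - d n) (\<lambda>z. 0)"
    using entire_fun_diff[OF assms] by simp
  then show "c n = d n"
    using entire_fun_zero_imp_coeffs_zero by fastforce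
qed

lemma mu_ent_eq_max_term:
  assumes "entire_fun v c F"
  shows "mu_ent v r F = max_term r c"
proof -
  have "ent_coeffs v F = c"
    unfolding ent_coeffs_def using assms entire_fun_coeffs_unique by blast
  then show ?thesis
    unfolding mu_ent_def max_term_def by simp
qed

lemma entire_fun_nonzero_imp_coeff_nonzero:
  assumes "entire_fun v c F" "F z \<noteq> 0"
  shows "\<exists>n. c n \<noteq> 0"
proof (rule ccontr)
  assume "\<not> (\<exists>n. c n \<noteq> 0)"
  then have "v_tendsto (\<lambda>N. \<Sum>n<N. c n * z ^ n) 0"
    by (simp add: v_tendsto_const)
  moreover have "v_tendsto (\<lambda>N. \<Sum>n<N. c n * z ^ n) (F z)"
    using assms(1) unfolding entire_fun_def series_sums_iff_v_tendsto ..
  ultimately show False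
    using v_tendsto_unique assms(2) by metis
qed

lemma entire_fun_mult:
  assumes "entire_fun v c F" "entire_fun v d G"
  shows "entire_fun v (cauchy_prod c d) (\<lambda>z. F z * G z)"
  unfolding entire_fun_def series_sums_iff_v_tendsto
proof
  fix z
  have "cauchy_prod c d n * z ^ n = (\<Sum>i\<le>n. (c i * z ^ i) * (d (n - i) * z ^ (n - i)))" for n
    unfolding cauchy_prod_def sum_distrib_right
    by (intro sum.cong) (simp_all add: mult_ac flip: power_add)
  moreover have "v_tendsto (\<lambda>N. \<Sum>n<N. \<Sum>i\<le>n. (c i * z ^ i) * (d (n - i) * z ^ (n - i))) (F z * G z)"
    using assms unfolding entire_fun_def series_sums_iff_v_tendsto
    by (intro v_tendsto_cauchy_product) auto
  ultimately show "v_tendsto (\<lambda>N. \<Sum>n<N. cauchy_prod c d n * z ^ n) (F z * G z)"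
    by simp
qed

lemma max_term_cauchy_prod_le:
  assumes c: "entire_fun v c F" and d: "entire_fun v d G" and r: "0 < r"
  shows "max_term r (cauchy_prod c d) \<le> max_term r c * max_term r d"
proof (rule max_term_least)
  fix n
  have "v (c i * d (n - i)) \<le> max_term r c * max_term r d / r ^ n" if "i \<le> n" for i
  proof -
    have "v (c i * d (n - i)) * r ^ n = (v (c i) * r ^ i) * (v (d (n - i)) * r ^ (n - i))"
      using that by (simp add: v_mult mult_ac flip: power_add)
    also have "\<dots> \<le> max_term r c * max_term r d"
      using max_term_upper[OF c] max_term_upper[OF d] max_term_nonneg[OF c] r
      by (intro mult_mono) auto
    finally show ?thesis
      using r by (simp add: pos_le_divide_eq)
  qed
  then have "v (cauchy_prod c d n) \<le> max_term r c * max_term r d / r ^ n"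
    unfolding cauchy_prod_def using max_term_nonneg[OF c] max_term_nonneg[OF d] r
    by (intro v_sum_le) auto
  then show "v (cauchy_prod c d n) * r ^ n \<le> max_term r c * max_term r d"
    using r by (simp add: pos_le_divide_eq)
qed

text \<open>
  At the sum of the two central indices, the product of the central terms strictly dominates every
  other summand of the Cauchy product, so the ultrametric inequality is an equality there.
\<close>

lemma max_term_cauchy_prod:
  assumes c: "entire_fun v c F" and d: "entire_fun v d G" and r: "0 < r"
  shows "max_term r (cauchy_prod c d) = max_term r c * max_term r d"
proof (cases "c = (\<lambda>n. 0) \<or> d = (\<lambda>n. 0)")
  case True
  then have "cauchy_prod c d = (\<lambda>n. 0)"
    by (auto simp: cauchy_prod_def fun_eq_iff)
  with True show ?thesis
    by auto
next
  case False
  then obtain n1 n2 where "c n1 \<noteq> 0" "d n2 \<noteq> 0"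
    by (auto simp: fun_eq_iff)
  obtain i0 where i0: "v (c i0) * r ^ i0 = max_term r c" "\<And>i. i < i0 \<Longrightarrow> v (c i) * r ^ i < max_term r c"
    using max_term_central_index[OF c r \<open>c n1 \<noteq> 0\<close>] by blast
  obtain j0 where j0: "v (d j0) * r ^ j0 = max_term r d" "\<And>j. j < j0 \<Longrightarrow> v (d j) * r ^ j < max_term r d"
    using max_term_central_index[OF d r \<open>d n2 \<noteq> 0\<close>] by blast
  have Mc: "0 < max_term r c" and Md: "0 < max_term r d"
    using max_term_pos c d r \<open>c n1 \<noteq> 0\<close> \<open>d n2 \<noteq> 0\<close> by blast+
  define n where "n = i0 + j0"
  have factor: "v (c i * d (n - i)) * r ^ n = (v (c i) * r ^ i) * (v (d (n - i)) * r ^ (n - i))"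
    if "i \<le> n" for i
    using that by (simp add: v_mult mult_ac flip: power_add)
  have central: "v (c i0 * d j0) * r ^ n = max_term r c * max_term r d"
    using factor[of i0] i0(1) j0(1) by (simp add: n_def)
  have others: "v (c i * d (n - i)) < v (c i0 * d j0)" if "i \<le> n" "i \<noteq> i0" for i
  proof -
    have "(v (c i) * r ^ i) * (v (d (n - i)) * r ^ (n - i)) < max_term r c * max_term r d"
    proof (cases "i < i0")
      case True
      have "(v (c i) * r ^ i) * (v (d (n - i)) * r ^ (n - i)) \<le> (v (c i) * r ^ i) * max_term r d"
        using max_term_upper[OF d, of r "n - i"] r by (intro mult_left_mono) auto
      also have "\<dots> < max_term r c * max_term r d"
        using i0(2)[OF True] Md by (rule mult_strict_right_mono)
      finally show ?thesis .
    next
      case False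
      then have "n - i < j0"
        using that unfolding n_def by auto
      have "(v (c i) * r ^ i) * (v (d (n - i)) * r ^ (n - i)) \<le> max_term r c * (v (d (n - i)) * r ^ (n - i))"
        using max_term_upper[OF c, of r i] r by (intro mult_right_mono) auto
      also have "\<dots> < max_term r c * max_term r d"
        using j0(2)[OF \<open>n - i < j0\<close>] Mc by (rule mult_strict_left_mono)
      finally show ?thesis .
    qed
    then have "v (c i * d (n - i)) * r ^ n < v (c i0 * d j0) * r ^ n"
      unfolding central factor[OF that(1)] .
    then show ?thesis
      using r by simp
  qed
  have "cauchy_prod c d n = c i0 * d j0 + (\<Sum>i\<in>{..n} - {i0}. c i * d (n - i))"
    unfolding cauchy_prod_def by (subst sum.remove[of _ i0]) (auto simp: n_def)
  also have "v \<dots> = v (c i0 * d j0)"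
    using others central Mc Md r by (intro v_add_eq_left v_sum_less) (auto simp: zero_less_mult_iff)
  finally have "v (cauchy_prod c d n) * r ^ n = max_term r c * max_term r d"
    using central by simp
  then have "max_term r c * max_term r d \<le> max_term r (cauchy_prod c d)"
    using max_term_upper[OF entire_fun_mult[OF c d], of r n] r by simp
  then show ?thesis
    using max_term_cauchy_prod_le[OF c d r] by simp
qed

lemma max_term_add_le:
  assumes c: "entire_fun v c F" and d: "entire_fun v d G" and r: "0 \<le> r"
  shows "max_term r (\<lambda>n. c n + d n) \<le> max (max_term r c) (max_term r d)"
proof (rule max_term_least)
  fix n
  have "v (c n + d n) * r ^ n \<le> max (v (c n)) (v (d n)) * r ^ n"
    using v_add_le r by (intro mult_right_mono) auto
  also have "\<dots> = max (v (c n) * r ^ n) (v (d n) * r ^ n)"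
    using r by (simp add: max_mult_distrib_right)
  also have "\<dots> \<le> max (max_term r c) (max_term r d)"
    using max_term_upper[OF c r, of n] max_term_upper[OF d r, of n] by auto
  finally show "v (c n + d n) * r ^ n \<le> max (max_term r c) (max_term r d)" .
qed

section \<open>Affine substitutions\<close>

text \<open>The k-th Taylor coefficient at \<beta> of the entire function with coefficients c.\<close>

definition taylor_shift :: "(nat \<Rightarrow> 'a) \<Rightarrow> 'a \<Rightarrow> nat \<Rightarrow> 'a" where
  "taylor_shift c \<beta> k = (SOME s. v_tendsto (\<lambda>J. \<Sum>j<J. c (j + k) * of_nat ((j + k) choose k) * \<beta> ^ j) s)"

lemma v_binomial_term_le:
  assumes "v x \<le> R"
  shows "v (c * of_nat m * x ^ j) \<le> v c * R ^ j"
proof -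
  have "v (c * of_nat m * x ^ j) \<le> v c * 1 * R ^ j"
    unfolding v_mult v_power using assms v_of_nat_le by (intro mult_mono power_mono) auto
  then show ?thesis
    by simp
qed

lemma taylor_shift_sums:
  assumes "entire_fun v c F"
  shows "v_tendsto (\<lambda>J. \<Sum>j<J. c (j + k) * of_nat ((j + k) choose k) * \<beta> ^ j) (taylor_shift c \<beta> k)"
proof -
  define R where "R = max 1 (v \<beta>)"
  have "(\<lambda>j. v (c (j + k)) * R ^ (j + k)) \<longlonglongrightarrow> 0"
    using LIMSEQ_ignore_initial_segment[OF entire_fun_terms_tendsto_0[OF assms, of R]]
    by (simp add: R_def)
  moreover have "v (c (j + k) * of_nat ((j + k) choose k) * \<beta> ^ j) \<le> v (c (j + k)) * R ^ (j + k)" for j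
  proof -
    have "v (c (j + k) * of_nat ((j + k) choose k) * \<beta> ^ j) \<le> v (c (j + k)) * R ^ j"
      by (rule v_binomial_term_le) (simp add: R_def)
    also have "\<dots> \<le> v (c (j + k)) * R ^ (j + k)"
      by (intro mult_left_mono power_increasing) (auto simp: R_def)
    finally show ?thesis .
  qed
  ultimately have "(\<lambda>j. v (c (j + k) * of_nat ((j + k) choose k) * \<beta> ^ j)) \<longlonglongrightarrow> 0"
    by (intro v_null_le[rotated]) auto
  then obtain s where "v_tendsto (\<lambda>J. \<Sum>j<J. c (j + k) * of_nat ((j + k) choose k) * \<beta> ^ j) s"
    by (rule series_v_tendsto_if_v_null)
  then show ?thesis
    unfolding taylor_shift_def by (rule someI)
qed

lemma taylor_shift_max_term_le:
  assumes "entire_fun v c F" "0 < r" "v \<beta> \<le> r"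
  shows "v (taylor_shift c \<beta> k) * r ^ k \<le> max_term r c"
proof -
  have "v (c (j + k) * of_nat ((j + k) choose k) * \<beta> ^ j) \<le> max_term r c / r ^ k" for j
  proof -
    have "v (c (j + k) * of_nat ((j + k) choose k) * \<beta> ^ j) * r ^ k \<le> v (c (j + k)) * r ^ j * r ^ k"
      using v_binomial_term_le[OF assms(3)] assms(2) by (intro mult_right_mono) auto
    also have "\<dots> \<le> max_term r c"
      using max_term_upper[OF assms(1), of r "j + k"] assms(2) by (simp add: power_add mult_ac)
    finally show ?thesis
      using assms(2) by (simp add: pos_le_divide_eq)
  qed
  then have "v (taylor_shift c \<beta> k - (\<Sum>j<0. c (j + k) * of_nat ((j + k) choose k) * \<beta> ^ j)) \<le> max_term r c / r ^ k"
    using max_term_nonneg[OF assms(1)] assms(2)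
    by (intro v_tendsto_series_tail_le[OF taylor_shift_sums[OF assms(1)]]) auto
  then show ?thesis
    using assms(2) by (simp add: pos_le_divide_eq)
qed

lemma entire_fun_taylor_shift:
  assumes "entire_fun v c F"
  shows "entire_fun v (taylor_shift c \<beta>) (\<lambda>z. F (z + \<beta>))"
  unfolding entire_fun_def series_sums_iff_v_tendsto
proof
  fix z
  define R where "R = max 1 (max (v z) (v \<beta>))"
  define u where "u n k = c n * of_nat (n choose k) * \<beta> ^ (n - k) * z ^ k" for n k
  show "v_tendsto (\<lambda>K. \<Sum>k<K. taylor_shift c \<beta> k * z ^ k) (F (z + \<beta>))"
  proof (rule v_tendsto_double_series_swap)
    show "v (u n k) \<le> v (c n) * R ^ n" if "k \<le> n" for n k
    proof -
      have "v (u n k) = v (c n * of_nat (n choose k) * \<beta> ^ (n - k)) * v z ^ k"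
        unfolding u_def by (simp add: v_mult v_power)
      also have "\<dots> \<le> v (c n) * R ^ (n - k) * R ^ k"
        using v_binomial_term_le[of \<beta> R "c n" "n choose k" "n - k"]
        by (intro mult_mono power_mono) (auto simp: R_def)
      finally show ?thesis
        using that by (simp add: mult.assoc flip: power_add)
    qed
    show "(\<lambda>n. v (c n) * R ^ n) \<longlonglongrightarrow> 0"
      using entire_fun_terms_tendsto_0[OF assms] by (simp add: R_def)
    have "(\<Sum>k\<le>n. u n k) = c n * (z + \<beta>) ^ n" for n
      unfolding u_def binomial_ring sum_distrib_left by (simp add: mult_ac)
    then show "v_tendsto (\<lambda>N. \<Sum>n<N. \<Sum>k\<le>n. u n k) (F (z + \<beta>))"
      using assms unfolding entire_fun_def series_sums_iff_v_tendsto by simp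
    fix k
    have "(\<Sum>j<J. u (j + k) k) = z ^ k * (\<Sum>j<J. c (j + k) * of_nat ((j + k) choose k) * \<beta> ^ j)" for J
      unfolding u_def sum_distrib_left by (simp add: mult_ac)
    then show "v_tendsto (\<lambda>J. \<Sum>j<J. u (j + k) k) (taylor_shift c \<beta> k * z ^ k)"
      using v_tendsto_cmult[OF taylor_shift_sums[OF assms], of "z ^ k" k \<beta>] by (simp add: mult.commute)
  qed
qed

lemma entire_fun_affine_comp:
  assumes "entire_fun v c F"
  shows "entire_fun v (\<lambda>n. taylor_shift c \<beta> n * \<alpha> ^ n) (\<lambda>z. F (\<alpha> * z + \<beta>))"
  unfolding entire_fun_def series_sums_iff_v_tendsto
proof
  fix z
  have "v_tendsto (\<lambda>N. \<Sum>n<N. taylor_shift c \<beta> n * (\<alpha> * z) ^ n) (F (\<alpha> * z + \<beta>))"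
    using entire_fun_taylor_shift[OF assms, of \<beta>]
    unfolding entire_fun_def series_sums_iff_v_tendsto ..
  then show "v_tendsto (\<lambda>N. \<Sum>n<N. taylor_shift c \<beta> n * \<alpha> ^ n * z ^ n) (F (\<alpha> * z + \<beta>))"
    by (simp add: power_mult_distrib mult.assoc)
qed

lemma max_term_affine_comp_le:
  assumes "entire_fun v c F" "0 < r" "v \<alpha> = 1" "v \<beta> \<le> r"
  shows "max_term r (\<lambda>n. taylor_shift c \<beta> n * \<alpha> ^ n) \<le> max_term r c"
  using taylor_shift_max_term_le[OF assms(1,2,4)] assms(3)
  by (intro max_term_least) (simp add: v_mult v_power)

lemma is_entire_const: "is_entire v (\<lambda>z. w)"
  unfolding is_entire_def using entire_fun_const by blast

lemma is_entire_add:
  assumes "is_entire v F" "is_entire v G"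
  shows "is_entire v (\<lambda>z. F z + G z)"
  using assms entire_fun_add unfolding is_entire_def by blast

lemma is_entire_diff:
  assumes "is_entire v F" "is_entire v G"
  shows "is_entire v (\<lambda>z. F z - G z)"
  using assms entire_fun_diff unfolding is_entire_def by blast

lemma is_entire_cmult:
  assumes "is_entire v F"
  shows "is_entire v (\<lambda>z. w * F z)"
  using assms entire_fun_cmult unfolding is_entire_def by blast

lemma is_entire_mult:
  assumes "is_entire v F" "is_entire v G"
  shows "is_entire v (\<lambda>z. F z * G z)"
  using assms entire_fun_mult unfolding is_entire_def by blast

lemma is_entire_affine_comp:
  assumes "is_entire v F"
  shows "is_entire v (\<lambda>z. F (\<alpha> * z + \<beta>))"
  using assms entire_fun_affine_comp unfolding is_entire_def by blast

lemma mu_ent_pos_iff: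
  assumes "is_entire v F" "0 < r"
  shows "0 < mu_ent v r F \<longleftrightarrow> (\<exists>z. F z \<noteq> 0)"
proof -
  obtain c where c: "entire_fun v c F"
    using assms(1) unfolding is_entire_def by blast
  have "(\<exists>n. c n \<noteq> 0) \<longleftrightarrow> (\<exists>z. F z \<noteq> 0)"
  proof
    assume "\<exists>n. c n \<noteq> 0"
    then have "F \<noteq> (\<lambda>z. 0)"
      using entire_fun_zero_imp_coeffs_zero c by blast
    then show "\<exists>z. F z \<noteq> 0"
      by (auto simp: fun_eq_iff)
  qed (use entire_fun_nonzero_imp_coeff_nonzero c in blast)
  moreover have "0 < max_term r c \<longleftrightarrow> (\<exists>n. c n \<noteq> 0)"
  proof
    assume "0 < max_term r c"
    then have "c \<noteq> (\<lambda>n. 0)"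
      by auto
    then show "\<exists>n. c n \<noteq> 0"
      by (auto simp: fun_eq_iff)
  qed (use max_term_pos[OF c assms(2)] in blast)
  ultimately show ?thesis
    using mu_ent_eq_max_term[OF c] by simp
qed

lemma mu_ent_mult:
  assumes "is_entire v F" "is_entire v G" "0 < r"
  shows "mu_ent v r (\<lambda>z. F z * G z) = mu_ent v r F * mu_ent v r G"
proof -
  obtain c d where c: "entire_fun v c F" and d: "entire_fun v d G"
    using assms unfolding is_entire_def by blast
  then show ?thesis
    using mu_ent_eq_max_term[OF entire_fun_mult[OF c d]] max_term_cauchy_prod[OF c d assms(3)]
    by (simp add: mu_ent_eq_max_term)
qed

lemma mu_ent_add_le:
  assumes "is_entire v F" "is_entire v G" "0 \<le> r"
  shows "mu_ent v r (\<lambda>z. F z + G z) \<le> max (mu_ent v r F) (mu_ent v r G)"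
proof -
  obtain c d where c: "entire_fun v c F" and d: "entire_fun v d G"
    using assms unfolding is_entire_def by blast
  then show ?thesis
    using mu_ent_eq_max_term[OF entire_fun_add[OF c d]] max_term_add_le[OF c d assms(3)]
    by (simp add: mu_ent_eq_max_term)
qed

lemma mu_ent_cmult:
  assumes "is_entire v F" "0 \<le> r"
  shows "mu_ent v r (\<lambda>z. w * F z) = v w * mu_ent v r F"
proof -
  obtain c where c: "entire_fun v c F"
    using assms(1) unfolding is_entire_def by blast
  have "max_term r (\<lambda>n. w * c n) = v w * max_term r c"
  proof (cases "w = 0")
    case False
    have "max_term r (\<lambda>n. w * c n) \<le> v w * max_term r c"
      using max_term_upper[OF c assms(2)] by (intro max_term_least) (simp add: v_mult mult.assoc mult_left_mono)
    moreover have "max_term r c \<le> max_term r (\<lambda>n. w * c n) / v w"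
      using max_term_upper[OF entire_fun_cmult[OF c] assms(2), of w] False
      by (intro max_term_least) (simp add: v_mult pos_le_divide_eq mult_ac)
    ultimately show ?thesis
      using False by (simp add: pos_le_divide_eq mult.commute)
  qed simp
  then show ?thesis
    using mu_ent_eq_max_term[OF entire_fun_cmult[OF c]] by (simp add: mu_ent_eq_max_term[OF c])
qed

lemma mu_ent_affine_comp_le:
  assumes "is_entire v F" "0 < r" "v \<alpha> = 1" "v \<beta> \<le> r"
  shows "mu_ent v r (\<lambda>z. F (\<alpha> * z + \<beta>)) \<le> mu_ent v r F"
proof -
  obtain c where c: "entire_fun v c F"
    using assms unfolding is_entire_def by blast
  then show ?thesis
    using mu_ent_eq_max_term[OF entire_fun_affine_comp[OF c]] max_term_affine_comp_le[OF c assms(2-)]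
    by (simp add: mu_ent_eq_max_term)
qed

lemma mu_ent_affine_comp:
  assumes "is_entire v F" "0 < r" "v \<alpha> = 1" "v \<beta> \<le> r"
  shows "mu_ent v r (\<lambda>z. F (\<alpha> * z + \<beta>)) = mu_ent v r F"
proof -
  have "\<alpha> \<noteq> 0"
    using assms(3) by auto
  have "mu_ent v r F = mu_ent v r (\<lambda>w. (\<lambda>z. F (\<alpha> * z + \<beta>)) (inverse \<alpha> * w + - \<beta> / \<alpha>))"
    using \<open>\<alpha> \<noteq> 0\<close> by (simp add: field_simps)
  also have "\<dots> \<le> mu_ent v r (\<lambda>z. F (\<alpha> * z + \<beta>))"
    using assms by (intro mu_ent_affine_comp_le is_entire_affine_comp) (simp_all add: v_inverse v_divide)
  finally show ?thesis
    using mu_ent_affine_comp_le[OF assms] by simp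
qed

lemma mu_ent_0 [simp]: "mu_ent v r (\<lambda>z. 0) = 0"
  using mu_ent_eq_max_term[OF entire_fun_const[of 0]] by simp

lemma mu_ent_pos:
  assumes "is_entire v F" "0 < r" "F z \<noteq> 0"
  shows "0 < mu_ent v r F"
  using mu_ent_pos_iff assms by blast

lemma entire_mult_nonzero:
  assumes "is_entire v F" "is_entire v G" "F z \<noteq> 0" "G w \<noteq> 0"
  shows "\<exists>z. F z * G z \<noteq> 0"
proof -
  have "0 < mu_ent v 1 F * mu_ent v 1 G"
    using mu_ent_pos assms by simp
  then show ?thesis
    using mu_ent_pos_iff[OF is_entire_mult[OF assms(1,2)]] by (simp add: mu_ent_mult[OF assms(1,2)])
qed

section \<open>Meromorphic functions\<close>

lemma mero_rep_entire:
  assumes "mero_rep v \<phi> G H"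
  shows "is_entire v G" "is_entire v H" "\<exists>z. H z \<noteq> 0"
  using assms unfolding mero_rep_def by blast+

lemma mero_rep_cross_ratio:
  assumes rep: "mero_rep v \<phi> G H" and rep': "mero_rep v \<phi> G' H'" and r: "0 < r"
  shows "mu_ent v r G * mu_ent v r H' = mu_ent v r G' * mu_ent v r H"
proof -
  note ent = mero_rep_entire[OF rep] mero_rep_entire[OF rep']
  define D where "D z = G z * H' z - G' z * H z" for z
  have D: "is_entire v D"
    unfolding D_def using ent by (intro is_entire_diff is_entire_mult)
  have "D z * H z * H' z = 0" for z
  proof (cases "H z = 0 \<or> H' z = 0")
    case False
    then have "G z / H z = G' z / H' z"
      using rep rep' unfolding mero_rep_def by metis
    with False show ?thesis
      unfolding D_def by (simp add: field_simps)
  qed auto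
  then have "(\<lambda>z. D z * H z * H' z) = (\<lambda>z. 0)"
    by (rule ext)
  then have "mu_ent v r D * mu_ent v r H * mu_ent v r H' = 0"
    using D ent r by (metis mu_ent_0 mu_ent_mult is_entire_mult)
  moreover have "0 < mu_ent v r H" "0 < mu_ent v r H'"
    using ent r mu_ent_pos by blast+
  ultimately have "\<not> 0 < mu_ent v r D"
    by simp
  then have "(\<lambda>z. G z * H' z) = (\<lambda>z. G' z * H z)"
    using mu_ent_pos_iff[OF D r] by (simp add: D_def fun_eq_iff)
  then show ?thesis
    using ent r by (metis mu_ent_mult)
qed

lemma mu_mero_rep:
  assumes "mero_rep v \<phi> G H" "0 < r"
  shows "mu v r \<phi> = mu_ent v r G / mu_ent v r H"
proof -
  define GH where "GH = (SOME gh. mero_rep v \<phi> (fst gh) (snd gh))"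
  have rep: "mero_rep v \<phi> (fst GH) (snd GH)"
    unfolding GH_def using someI[of "\<lambda>gh. mero_rep v \<phi> (fst gh) (snd gh)" "(G, H)"] assms(1) by simp
  have "0 < mu_ent v r H" "0 < mu_ent v r (snd GH)"
    using mero_rep_entire assms(1) rep assms(2) mu_ent_pos by metis+
  then show ?thesis
    using mero_rep_cross_ratio[OF rep assms(1,2)]
    unfolding mu_def Let_def GH_def[symmetric] by (simp add: field_simps)
qed

lemma mero_rep_mult:
  assumes "mero_rep v \<phi> G1 H1" "mero_rep v \<psi> G2 H2"
  shows "mero_rep v (\<lambda>z. \<phi> z * \<psi> z) (\<lambda>z. G1 z * G2 z) (\<lambda>z. H1 z * H2 z)"
  using assms entire_mult_nonzero is_entire_mult unfolding mero_rep_def by auto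

lemma mero_rep_add:
  assumes "mero_rep v \<phi> G1 H1" "mero_rep v \<psi> G2 H2"
  shows "mero_rep v (\<lambda>z. \<phi> z + \<psi> z) (\<lambda>z. G1 z * H2 z + G2 z * H1 z) (\<lambda>z. H1 z * H2 z)"
  using assms entire_mult_nonzero unfolding mero_rep_def
  by (auto intro!: is_entire_add is_entire_mult simp: field_simps)

lemma mero_rep_cmult:
  assumes "mero_rep v \<phi> G H"
  shows "mero_rep v (\<lambda>z. w * \<phi> z) (\<lambda>z. w * G z) H"
  using assms is_entire_cmult unfolding mero_rep_def by auto

text \<open>Where H z = 0 the value \<phi> z is unconstrained, so the denominator of 1/\<phi> must vanish there too.\<close>

lemma mero_rep_inverse:
  assumes "mero_rep v \<phi> G H" "G w \<noteq> 0"
  shows "mero_rep v (\<lambda>z. inverse (\<phi> z)) (\<lambda>z. H z * H z) (\<lambda>z. G z * H z)"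
proof -
  have "inverse (\<phi> z) = H z * H z / (G z * H z)" if "G z * H z \<noteq> 0" for z
  proof -
    have "\<phi> z = G z / H z"
      using assms(1) that unfolding mero_rep_def by simp
    then show ?thesis
      using that by simp
  qed
  moreover obtain z where "H z \<noteq> 0"
    using assms(1) unfolding mero_rep_def by blast
  ultimately show ?thesis
    using assms entire_mult_nonzero[of G H w z] is_entire_mult unfolding mero_rep_def by auto
qed

lemma mero_rep_affine_comp:
  assumes "mero_rep v \<phi> G H" "\<alpha> \<noteq> 0"
  shows "mero_rep v (\<lambda>z. \<phi> (\<alpha> * z + \<beta>)) (\<lambda>z. G (\<alpha> * z + \<beta>)) (\<lambda>z. H (\<alpha> * z + \<beta>))"
proof -
  obtain z where "H z \<noteq> 0"
    using assms(1) unfolding mero_rep_def by blast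
  then have "H (\<alpha> * ((z - \<beta>) / \<alpha>) + \<beta>) \<noteq> 0"
    using assms(2) by simp
  then show ?thesis
    using assms(1) is_entire_affine_comp unfolding mero_rep_def by blast
qed

lemma mu_mult:
  assumes "is_mero v \<phi>" "is_mero v \<psi>" "0 < r"
  shows "mu v r (\<lambda>z. \<phi> z * \<psi> z) = mu v r \<phi> * mu v r \<psi>"
proof -
  obtain G1 H1 G2 H2 where rep: "mero_rep v \<phi> G1 H1" "mero_rep v \<psi> G2 H2"
    using assms unfolding is_mero_def by blast
  then show ?thesis
    using mu_mero_rep[OF mero_rep_mult[OF rep] assms(3)] mu_mero_rep[OF _ assms(3)]
    by (simp add: mu_ent_mult mero_rep_entire assms(3))
qed

lemma mu_add_le:
  assumes "is_mero v \<phi>" "is_mero v \<psi>" "0 < r"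
  shows "mu v r (\<lambda>z. \<phi> z + \<psi> z) \<le> max (mu v r \<phi>) (mu v r \<psi>)"
proof -
  obtain G1 H1 G2 H2 where rep: "mero_rep v \<phi> G1 H1" "mero_rep v \<psi> G2 H2"
    using assms unfolding is_mero_def by blast
  note ent = mero_rep_entire[OF rep(1)] mero_rep_entire[OF rep(2)]
  have H: "0 < mu_ent v r H1" "0 < mu_ent v r H2"
    using ent assms(3) mu_ent_pos by blast+
  have "mu_ent v r (\<lambda>z. G1 z * H2 z + G2 z * H1 z)
      \<le> max (mu_ent v r G1 * mu_ent v r H2) (mu_ent v r G2 * mu_ent v r H1)"
    using mu_ent_add_le[of "\<lambda>z. G1 z * H2 z" "\<lambda>z. G2 z * H1 z" r] ent assms(3)
      mu_ent_mult[of G1 H2 r] mu_ent_mult[of G2 H1 r]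
    by (simp add: is_entire_mult)
  also have "\<dots> = max (mu_ent v r G1 / mu_ent v r H1) (mu_ent v r G2 / mu_ent v r H2)
      * (mu_ent v r H1 * mu_ent v r H2)"
    using H by (simp add: max_mult_distrib_right)
  finally show ?thesis
    using mu_mero_rep[OF mero_rep_add[OF rep] assms(3)] mu_mero_rep[OF rep(1) assms(3)]
      mu_mero_rep[OF rep(2) assms(3)] H
    by (simp add: mu_ent_mult ent assms(3) pos_divide_le_eq)
qed

lemma mu_cmult:
  assumes "is_mero v \<phi>" "0 < r"
  shows "mu v r (\<lambda>z. w * \<phi> z) = v w * mu v r \<phi>"
proof -
  obtain G H where rep: "mero_rep v \<phi> G H"
    using assms unfolding is_mero_def by blast
  then show ?thesis
    using mu_mero_rep[OF mero_rep_cmult[OF rep] assms(2)] mu_mero_rep[OF rep assms(2)] assms(2)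
    by (simp add: mu_ent_cmult mero_rep_entire)
qed

lemma mu_pos:
  assumes "mero_nonzero v \<phi>" "0 < r"
  shows "0 < mu v r \<phi>"
proof -
  obtain G H w where rep: "mero_rep v \<phi> G H" and "G w \<noteq> 0"
    using assms unfolding mero_nonzero_def by blast
  then show ?thesis
    using mu_mero_rep[OF rep assms(2)] mero_rep_entire[OF rep] assms(2) mu_ent_pos by auto
qed

lemma mu_inverse:
  assumes "mero_nonzero v \<phi>" "0 < r"
  shows "mu v r (\<lambda>z. inverse (\<phi> z)) = inverse (mu v r \<phi>)"
proof -
  obtain G H w where rep: "mero_rep v \<phi> G H" and "G w \<noteq> 0"
    using assms unfolding mero_nonzero_def by blast
  have "0 < mu_ent v r G" "0 < mu_ent v r H"
    using mero_rep_entire[OF rep] \<open>G w \<noteq> 0\<close> assms(2) mu_ent_pos by blast+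
  then show ?thesis
    using mu_mero_rep[OF mero_rep_inverse[OF rep \<open>G w \<noteq> 0\<close>] assms(2)] mu_mero_rep[OF rep assms(2)]
    by (simp add: mu_ent_mult mero_rep_entire[OF rep] assms(2))
qed

lemma mu_affine_comp:
  assumes "is_mero v \<phi>" "0 < r" "v \<alpha> = 1" "v \<beta> \<le> r"
  shows "mu v r (\<lambda>z. \<phi> (\<alpha> * z + \<beta>)) = mu v r \<phi>"
proof -
  obtain G H where rep: "mero_rep v \<phi> G H"
    using assms unfolding is_mero_def by blast
  have "\<alpha> \<noteq> 0"
    using assms(3) by auto
  then show ?thesis
    using mu_mero_rep[OF mero_rep_affine_comp[OF rep] assms(2)] mu_mero_rep[OF rep assms(2)]
    by (simp add: mu_ent_affine_comp mero_rep_entire[OF rep] assms(2-))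
qed

lemma is_mero_mult:
  assumes "is_mero v \<phi>" "is_mero v \<psi>"
  shows "is_mero v (\<lambda>z. \<phi> z * \<psi> z)"
  using assms mero_rep_mult unfolding is_mero_def by blast

lemma is_mero_add:
  assumes "is_mero v \<phi>" "is_mero v \<psi>"
  shows "is_mero v (\<lambda>z. \<phi> z + \<psi> z)"
  using assms mero_rep_add unfolding is_mero_def by blast

lemma is_mero_cmult:
  assumes "is_mero v \<phi>"
  shows "is_mero v (\<lambda>z. w * \<phi> z)"
  using assms mero_rep_cmult unfolding is_mero_def by blast

lemma is_mero_inverse:
  assumes "mero_nonzero v \<phi>"
  shows "is_mero v (\<lambda>z. inverse (\<phi> z))"
  using assms mero_rep_inverse unfolding is_mero_def mero_nonzero_def by blast

lemma is_mero_affine_comp: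
  assumes "is_mero v \<phi>" "\<alpha> \<noteq> 0"
  shows "is_mero v (\<lambda>z. \<phi> (\<alpha> * z + \<beta>))"
  using assms mero_rep_affine_comp unfolding is_mero_def by blast

lemma mero_nonzero_imp_is_mero: "mero_nonzero v \<phi> \<Longrightarrow> is_mero v \<phi>"
  unfolding mero_nonzero_def is_mero_def by blast

lemma is_mero_0: "is_mero v (\<lambda>z. 0)"
  unfolding is_mero_def mero_rep_def using is_entire_const[of 0] is_entire_const[of 1] by force

lemma mu_0 [simp]:
  assumes "0 < r"
  shows "mu v r (\<lambda>z. 0) = 0"
proof -
  have "mero_rep v (\<lambda>z. 0) (\<lambda>z. 0) (\<lambda>z. 1)"
    unfolding mero_rep_def using is_entire_const by simp
  then show ?thesis
    using mu_mero_rep assms by simp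
qed

lemma is_mero_affine_quotient:
  assumes "mero_nonzero v f" "\<alpha> \<noteq> 0"
  shows "is_mero v (\<lambda>z. f (\<alpha> * z + \<beta>) / f z)"
  unfolding divide_inverse
  using assms by (intro is_mero_mult is_mero_affine_comp is_mero_inverse mero_nonzero_imp_is_mero)

lemma mu_affine_quotient:
  assumes "mero_nonzero v f" "0 < r" "v \<alpha> = 1" "v \<beta> \<le> r"
  shows "mu v r (\<lambda>z. f (\<alpha> * z + \<beta>) / f z) = 1"
proof -
  have "is_mero v (\<lambda>z. f (\<alpha> * z + \<beta>))" "is_mero v (\<lambda>z. inverse (f z))"
    using assms by (auto intro: is_mero_affine_comp is_mero_inverse mero_nonzero_imp_is_mero)
  then show ?thesis
    unfolding divide_inverse
    using assms mu_pos[OF assms(1,2)]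
    by (simp add: mu_mult mu_affine_comp mu_inverse mero_nonzero_imp_is_mero)
qed

lemma mu_sum_affine_quotient_le:
  assumes "mero_nonzero v f" "0 < r" "\<forall>(w, \<alpha>, \<beta>) \<in> set xs. v w = 1 \<and> v \<alpha> = 1 \<and> v \<beta> \<le> r"
  shows "mu v r (\<lambda>z. (\<Sum>(w, \<alpha>, \<beta>) \<leftarrow> xs. w * f (\<alpha> * z + \<beta>)) / f z) \<le> 1"
proof -
  have "is_mero v (\<lambda>z. (\<Sum>(w, \<alpha>, \<beta>) \<leftarrow> xs. w * f (\<alpha> * z + \<beta>)) / f z)
      \<and> mu v r (\<lambda>z. (\<Sum>(w, \<alpha>, \<beta>) \<leftarrow> xs. w * f (\<alpha> * z + \<beta>)) / f z) \<le> 1"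
    using assms(3)
  proof (induction xs)
    case Nil
    then show ?case
      using is_mero_0 assms(2) by simp
  next
    case (Cons x xs)
    obtain w \<alpha> \<beta> where x: "x = (w, \<alpha>, \<beta>)"
      by (cases x)
    then have x_props: "v w = 1" "v \<alpha> = 1" "v \<beta> \<le> r"
      using Cons.prems by auto
    define \<psi> where "\<psi> z = (\<Sum>(w, \<alpha>, \<beta>) \<leftarrow> xs. w * f (\<alpha> * z + \<beta>)) / f z" for z
    have \<psi>: "is_mero v \<psi>" "mu v r \<psi> \<le> 1"
      using Cons unfolding \<psi>_def by auto
    have "\<alpha> \<noteq> 0"
      using x_props(2) by auto
    then have q: "is_mero v (\<lambda>z. f (\<alpha> * z + \<beta>) / f z)"
      by (rule is_mero_affine_quotient[OF assms(1)])
    define \<chi> where "\<chi> z = w * (f (\<alpha> * z + \<beta>) / f z)" for z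
    have \<chi>_mero: "is_mero v \<chi>"
      unfolding \<chi>_def by (rule is_mero_cmult[OF q])
    have "mu v r \<chi> = v w * mu v r (\<lambda>z. f (\<alpha> * z + \<beta>) / f z)"
      unfolding \<chi>_def by (rule mu_cmult[OF q assms(2)])
    then have \<chi>_mu: "mu v r \<chi> = 1"
      using mu_affine_quotient[OF assms(1,2) x_props(2,3)] x_props(1) by simp
    have "(\<lambda>z. (\<Sum>(w, \<alpha>, \<beta>) \<leftarrow> x # xs. w * f (\<alpha> * z + \<beta>)) / f z) = (\<lambda>z. \<chi> z + \<psi> z)"
      unfolding x \<psi>_def \<chi>_def by (simp add: add_divide_distrib)
    then show ?case
      using mu_add_le[OF \<chi>_mero \<psi>(1) assms(2)] \<chi>_mero \<chi>_mu \<psi> by (simp add: is_mero_add)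
  qed
  then show ?thesis ..
qed

end

context nonarch_field
begin

section \<open>The difference operator\<close>

text \<open>
  Each iterate of the difference operator is a combination of the translates f(\<alpha> z + \<beta>), encoded
  as a list of triples (w, \<alpha>, \<beta>).
\<close>

lemma diffL_iterate_eq_sum_list:
  assumes "v a = 1" "v b \<le> r"
  obtains xs where "\<forall>(w, \<alpha>, \<beta>) \<in> set xs. v w = 1 \<and> v \<alpha> = 1 \<and> v \<beta> \<le> r"
    and "\<And>z. (diffL a b ^^ m) f z = (\<Sum>(w, \<alpha>, \<beta>) \<leftarrow> xs. w * f (\<alpha> * z + \<beta>))"
proof (induction m arbitrary: thesis)
  case 0
  show ?case
    using 0[of "[(1, 1, 0)]"] order_trans[OF v_nonneg assms(2)] by simp
next
  case (Suc m)
  then obtain xs where xs: "\<forall>(w, \<alpha>, \<beta>) \<in> set xs. v w = 1 \<and> v \<alpha> = 1 \<and> v \<beta> \<le> r"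
    and eq: "\<And>z. (diffL a b ^^ m) f z = (\<Sum>(w, \<alpha>, \<beta>) \<leftarrow> xs. w * f (\<alpha> * z + \<beta>))"
    by blast
  define ys where "ys = map (\<lambda>(w, \<alpha>, \<beta>). (w, \<alpha> * a, \<alpha> * b + \<beta>)) xs @ map (\<lambda>(w, \<alpha>, \<beta>). (- w, \<alpha>, \<beta>)) xs"
  have "v (\<alpha> * b + \<beta>) \<le> r" if "v \<alpha> = 1" "v \<beta> \<le> r" for \<alpha> \<beta>
    using v_add_le[of "\<alpha> * b" \<beta>] that assms(2) by (simp add: v_mult)
  then have "\<forall>(w, \<alpha>, \<beta>) \<in> set ys. v w = 1 \<and> v \<alpha> = 1 \<and> v \<beta> \<le> r"
    using xs assms(1) unfolding ys_def by (auto simp: v_mult)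
  moreover have "(diffL a b ^^ Suc m) f z = (\<Sum>(w, \<alpha>, \<beta>) \<leftarrow> ys. w * f (\<alpha> * z + \<beta>))" for z
    unfolding ys_def funpow.simps comp_def diffL_def eq
    by (induction xs) (auto simp: algebra_simps)
  ultimately show ?case
    using Suc.prems by blast
qed

end

theorem lemma2p3:
  fixes v :: "'a::field_char_0 \<Rightarrow> real" and a b :: 'a and f :: "'a \<Rightarrow> 'a"
    and m :: nat and r :: real
  assumes "nonarch_abs v" and "nontrivial_abs v" and "complete_abs v"
    and "alg_closed TYPE('a)"
    and "v a = 1"
    and "is_mero v f" and "mero_nonzero v f"
    and "0 < m"
    and "v b < r"
  shows "mu v r (\<lambda>z. f (a * z + b)) = mu v r f
       \<and> mu v r (\<lambda>z. f (a * z + b) / f z) = 1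
       \<and> mu v r (\<lambda>z. ((diffL a b) ^^ m) f z / f z) \<le> 1"
proof -
  interpret nonarch_complete_field v
    using assms(1-3) by unfold_locales
  have r: "0 < r" and b: "v b \<le> r"
    using assms(9) v_nonneg[of b] by linarith+
  obtain xs where xs: "\<forall>(w, \<alpha>, \<beta>) \<in> set xs. v w = 1 \<and> v \<alpha> = 1 \<and> v \<beta> \<le> r"
    and diff: "\<And>z. (diffL a b ^^ m) f z = (\<Sum>(w, \<alpha>, \<beta>) \<leftarrow> xs. w * f (\<alpha> * z + \<beta>))"
    using diffL_iterate_eq_sum_list[OF assms(5) b] by blast
  show ?thesis
    using mu_affine_comp[OF assms(6) r assms(5) b] mu_affine_quotient[OF assms(7) r assms(5) b]
      mu_sum_affine_quotient_le[OF assms(7) r xs]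
    by (simp add: diff)
qed

end
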